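(* Let $R$ be a recursive ring and $\phi:\mathbb{Z}\to R^k$ an injection such that for every $m\ge1$ and every Diophantine subset $A\subseteq\mathbb{Z}^m$ over $\mathbb{Z}$, the image $\phi(A)=\{(\phi(a_1),\ldots,\phi(a_m)):(a_1,\ldots,a_m)\in A\}\subseteq R^{km}$ is Diophantine over $R$. Then $\phi$ is recursive (computable).
   Context: A ring $R$ is recursive if there is an injection of $R$ into $\mathbb{Z}$ with recursive image under which the ring operations correspond to recursive functions. A set $A\subseteq R^n$ is Diophantine over $R$ if there is a polynomial $p(T_1,\ldots,T_n,X_1,\ldots,X_s)$ with coefficients in $R$ such that $(t_1,\ldots,t_n)\in A$ iff $\exists x_1,\ldots,x_s\in R$ with $p(t_1,\ldots,t_n,x_1,\ldots,x_s)=0$. *)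

theory Defs
  imports Main "HOL-Library.Nat_Bijection"
begin

datatype recf = Zero | Succ | Proj nat | Comp recf "recf list" | Prim recf recf | Mini recf

inductive reval :: "recf \<Rightarrow> nat list \<Rightarrow> nat \<Rightarrow> bool" where
  reval_zero: "reval Zero xs 0"
| reval_succ: "reval Succ (x # xs) (Suc x)"
| reval_proj: "i < length xs \<Longrightarrow> reval (Proj i) xs (xs ! i)"
| reval_comp: "length ys = length gs \<Longrightarrow> (\<forall>i<length gs. reval (gs ! i) xs (ys ! i))
     \<Longrightarrow> reval f ys z \<Longrightarrow> reval (Comp f gs) xs z"
| reval_prim0: "reval f xs y \<Longrightarrow> reval (Prim f g) (0 # xs) y"
| reval_primS: "reval (Prim f g) (n # xs) y \<Longrightarrow> reval g (n # y # xs) z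
     \<Longrightarrow> reval (Prim f g) (Suc n # xs) z"
| reval_mini: "reval f (y # xs) 0 \<Longrightarrow> (\<forall>z<y. \<exists>v. 0 < v \<and> reval f (z # xs) v)
     \<Longrightarrow> reval (Mini f) xs y"

definition computable_nat :: "nat \<Rightarrow> (nat list \<Rightarrow> nat) \<Rightarrow> bool" where
  "computable_nat n f \<longleftrightarrow> (\<exists>r. \<forall>xs. length xs = n \<longrightarrow> reval r xs (f xs))"

definition computable_int :: "nat \<Rightarrow> (int list \<Rightarrow> int) \<Rightarrow> bool" where
  "computable_int n f \<longleftrightarrow> computable_nat n (\<lambda>xs. int_encode (f (map int_decode xs)))"

definition recursive_presentation :: "('a::comm_ring_1 \<Rightarrow> int) \<Rightarrow> bool" where
  "recursive_presentation iota \<longleftrightarrow>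
     inj iota
   \<and> computable_int 1 (\<lambda>xs. if xs ! 0 \<in> range iota then 1 else 0)
   \<and> (\<exists>F. computable_int 2 F \<and> (\<forall>x y. F [iota x, iota y] = iota (x + y)))
   \<and> (\<exists>G. computable_int 2 G \<and> (\<forall>x y. G [iota x, iota y] = iota (x * y)))"

datatype 'a dpoly = PConst 'a | PVar nat | PAdd "'a dpoly" "'a dpoly" | PMul "'a dpoly" "'a dpoly"

primrec peval :: "'a::comm_ring_1 dpoly \<Rightarrow> (nat \<Rightarrow> 'a) \<Rightarrow> 'a" where
  "peval (PConst c) v = c"
| "peval (PVar i) v = v i"
| "peval (PAdd p q) v = peval p v + peval q v"
| "peval (PMul p q) v = peval p v * peval q v"

definition diophantine :: "nat \<Rightarrow> 'a::comm_ring_1 list set \<Rightarrow> bool" where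
  "diophantine n A \<longleftrightarrow> A \<subseteq> {t. length t = n} \<and>
     (\<exists>p. \<forall>t. length t = n \<longrightarrow>
        (t \<in> A \<longleftrightarrow> (\<exists>x. peval p (\<lambda>i. if i < n then t ! i else x (i - n)) = 0)))"

end

theory Submission
  imports Defs
begin

(*
  Fix a recursive presentation iota of R with computable addition F and
  multiplication G, and code an element x of R by the natural number int_encode (iota x),
  a k-tuple by the list code of its entries.  For every shift c the graph
  {(a, a + c)} is Diophantine over Z, so by hypothesis its image
  {(phi a, phi (a + c))} is Diophantine over R, witnessed by a polynomial p.  Given the
  code of phi a, an unbounded search over codes of tuples (y, x) with p(phi a, y, x) = 0
  terminates (a solution exists) and is correct (the polynomial, evaluated on codes with F
  and G, only vanishes when y = phi (a + c), by injectivity of phi and iota).  Hence the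
  maps "code of phi a |-> code of phi (a + 1)" and "... |-> code of phi (a - 1)" are
  partial recursive on the relevant inputs; iterating them from phi 0 by primitive
  recursion computes the code of phi a from a, and projecting gives the theorem.
*)

abbreviation cn :: "nat \<Rightarrow> (nat list \<Rightarrow> nat) \<Rightarrow> bool" where
  "cn \<equiv> computable_nat"

lemma cn_cong:
  assumes "cn n f" and "\<And>xs. length xs = n \<Longrightarrow> f xs = g xs"
  shows "cn n g"
  using assms unfolding computable_nat_def by auto

lemma cn_proj: "i < n \<Longrightarrow> cn n (\<lambda>xs. xs ! i)"
  unfolding computable_nat_def by (auto intro!: exI[of _ "Proj i"] reval_proj)

lemma cn_succ: "cn 1 (\<lambda>xs. Suc (xs ! 0))"
  unfolding computable_nat_def by (auto intro!: exI[of _ Succ] reval_succ simp: length_Suc_conv)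

lemma cn_comp:
  assumes "cn (length gs) f" and "\<forall>g\<in>set gs. cn n g"
  shows "cn n (\<lambda>xs. f (map (\<lambda>g. g xs) gs))"
proof -
  obtain R where R: "\<forall>g\<in>set gs. \<forall>xs. length xs = n \<longrightarrow> reval (R g) xs (g xs)"
    using assms(2) unfolding computable_nat_def by metis
  obtain r where r: "\<forall>ys. length ys = length gs \<longrightarrow> reval r ys (f ys)"
    using assms(1) unfolding computable_nat_def by blast
  have "reval (Comp r (map R gs)) xs (f (map (\<lambda>g. g xs) gs))" if "length xs = n" for xs
    by (rule reval_comp[where ys="map (\<lambda>g. g xs) gs"]) (use R r that in auto)
  then show ?thesis unfolding computable_nat_def by blast
qed

lemma cn_comp1: "cn 1 f \<Longrightarrow> cn n g \<Longrightarrow> cn n (\<lambda>xs. f [g xs])"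
  using cn_comp[of "[g]" f n] by simp

lemma cn_Suc: "cn n g \<Longrightarrow> cn n (\<lambda>xs. Suc (g xs))"
  using cn_comp1[OF cn_succ] by simp

lemma cn_comp2: "cn 2 f \<Longrightarrow> cn n g \<Longrightarrow> cn n h \<Longrightarrow> cn n (\<lambda>xs. f [g xs, h xs])"
  using cn_comp[of "[g, h]" f n] by (simp add: numeral_2_eq_2)

lemma cn_comp3:
  "cn 3 f \<Longrightarrow> cn n g \<Longrightarrow> cn n h \<Longrightarrow> cn n u \<Longrightarrow> cn n (\<lambda>xs. f [g xs, h xs, u xs])"
  using cn_comp[of "[g, h, u]" f n] by (simp add: numeral_3_eq_3)

lemma cn_const: "cn n (\<lambda>_. c)"
proof (induction c)
  case 0
  show ?case unfolding computable_nat_def by (auto intro!: exI[of _ Zero] reval_zero)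
next
  case (Suc c)
  show ?case using cn_Suc[OF Suc] .
qed

lemma cn_prim_rec:
  assumes "cn n f" and "cn (Suc (Suc n)) g"
    and "\<And>xs. length xs = n \<Longrightarrow> h (0 # xs) = f xs"
    and "\<And>m xs. length xs = n \<Longrightarrow> h (Suc m # xs) = g (m # h (m # xs) # xs)"
  shows "cn (Suc n) h"
proof -
  obtain rf where rf: "\<forall>xs. length xs = n \<longrightarrow> reval rf xs (f xs)"
    using assms(1) unfolding computable_nat_def by blast
  obtain rg where rg: "\<forall>xs. length xs = Suc (Suc n) \<longrightarrow> reval rg xs (g xs)"
    using assms(2) unfolding computable_nat_def by blast
  have prim: "reval (Prim rf rg) (m # xs) (h (m # xs))" if "length xs = n" for m xs
  proof (induction m)
    case 0
    show ?case using rf that by (simp add: assms(3) reval_prim0)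
  next
    case (Suc m)
    have "reval rg (m # h (m # xs) # xs) (h (Suc m # xs))"
      using rg that by (simp add: assms(4))
    then show ?case by (rule reval_primS[OF Suc.IH])
  qed
  have "reval (Prim rf rg) xs (h xs)" if "length xs = Suc n" for xs
    using that prim by (cases xs) auto
  then show ?thesis unfolding computable_nat_def by blast
qed

lemma reval_mini_least:
  assumes "\<forall>ys. length ys = Suc n \<longrightarrow> reval r ys (f ys)"
    and "length xs = n" and "f (y # xs) = 0"
  shows "reval (Mini r) xs (LEAST y. f (y # xs) = 0)"
proof (rule reval_mini)
  have "f ((LEAST y. f (y # xs) = 0) # xs) = 0" using assms(3) by (rule LeastI)
  then show "reval r ((LEAST y. f (y # xs) = 0) # xs) 0"
    using assms(1)[rule_format, of "(LEAST y. f (y # xs) = 0) # xs"] assms(2) by simp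
  show "\<forall>z<(LEAST y. f (y # xs) = 0). \<exists>v>0. reval r (z # xs) v"
  proof (intro allI impI)
    fix z assume "z < (LEAST y. f (y # xs) = 0)"
    then have "f (z # xs) \<noteq> 0" by (rule not_less_Least)
    then show "\<exists>v>0. reval r (z # xs) v" using assms(1,2) by force
  qed
qed

lemma cn_mini:
  assumes "cn (Suc n) f" and "\<And>xs. length xs = n \<Longrightarrow> \<exists>y. f (y # xs) = 0"
  shows "cn n (\<lambda>xs. LEAST y. f (y # xs) = 0)"
proof -
  obtain r where r: "\<forall>ys. length ys = Suc n \<longrightarrow> reval r ys (f ys)"
    using assms(1) unfolding computable_nat_def by blast
  have "reval (Mini r) xs (LEAST y. f (y # xs) = 0)" if "length xs = n" for xs
    using assms(2)[OF that] reval_mini_least[OF r that] by blast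
  then show ?thesis unfolding computable_nat_def by blast
qed

lemma cn_add:
  assumes "cn n g" and "cn n h" shows "cn n (\<lambda>xs. g xs + h xs)"
proof -
  have "cn 2 (\<lambda>xs. xs ! 0 + xs ! 1)" unfolding numeral_2_eq_2
    by (rule cn_prim_rec[where f="\<lambda>xs. xs ! 0" and g="\<lambda>xs. Suc (xs ! 1)"])
      (auto intro!: cn_proj cn_Suc)
  from cn_comp2[OF this assms] show ?thesis by simp
qed

lemma cn_pred:
  assumes "cn n g" shows "cn n (\<lambda>xs. g xs - 1)"
proof -
  have "cn 1 (\<lambda>xs. xs ! 0 - 1)" unfolding One_nat_def
    by (rule cn_prim_rec[where f="\<lambda>xs. 0" and g="\<lambda>xs. xs ! 0"]) (auto intro: cn_proj cn_const)
  from cn_comp1[OF this assms] show ?thesis by simp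
qed

text \<open>Truncated subtraction; note that the recursion runs on the subtrahend.\<close>

lemma cn_diff:
  assumes "cn n g" and "cn n h" shows "cn n (\<lambda>xs. g xs - h xs)"
proof -
  have "cn 2 (\<lambda>xs. xs ! 1 - xs ! 0)" unfolding numeral_2_eq_2
    by (rule cn_prim_rec[where f="\<lambda>xs. xs ! 0" and g="\<lambda>xs. xs ! 1 - 1"])
      (auto intro!: cn_proj cn_pred simp del: One_nat_def)
  from cn_comp2[OF this assms(2,1)] show ?thesis by simp
qed

lemma cn_if_zero:
  assumes "cn n c" and "cn n g" and "cn n h"
  shows "cn n (\<lambda>xs. if c xs = 0 then g xs else h xs)"
proof -
  have "cn 3 (\<lambda>xs. if xs ! 0 = 0 then xs ! 1 else xs ! 2)" unfolding numeral_3_eq_3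
    by (rule cn_prim_rec[where f="\<lambda>xs. xs ! 0" and g="\<lambda>xs. xs ! 3"]) (auto intro: cn_proj)
  from cn_comp3[OF this assms] show ?thesis by (simp cong: if_cong)
qed

lemma cn_triangle:
  assumes "cn n g" shows "cn n (\<lambda>xs. triangle (g xs))"
proof -
  have "cn 1 (\<lambda>xs. triangle (xs ! 0))" unfolding One_nat_def
    by (rule cn_prim_rec[where f="\<lambda>xs. 0" and g="\<lambda>xs. xs ! 1 + Suc (xs ! 0)"])
      (auto intro!: cn_const cn_add cn_proj cn_Suc)
  from cn_comp1[OF this assms] show ?thesis by simp
qed

lemma cn_mod2:
  assumes "cn n g" shows "cn n (\<lambda>xs. g xs mod 2)"
proof -
  have "cn 1 (\<lambda>xs. xs ! 0 mod 2)" unfolding One_nat_def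
    by (rule cn_prim_rec[where f="\<lambda>xs. 0" and g="\<lambda>xs. 1 - xs ! 1"])
      (auto intro!: cn_const cn_diff cn_proj simp: mod_Suc)
  from cn_comp1[OF this assms] show ?thesis by simp
qed

lemma cn_div2:
  assumes "cn n g" shows "cn n (\<lambda>xs. g xs div 2)"
proof -
  have "cn 1 (\<lambda>xs. xs ! 0 div 2)" unfolding One_nat_def
    by (rule cn_prim_rec[where f="\<lambda>xs. 0" and g="\<lambda>xs. xs ! 1 + xs ! 0 mod 2"])
      (auto intro!: cn_const cn_add cn_mod2 cn_proj simp: div_Suc mod_Suc)
  from cn_comp1[OF this assms] show ?thesis by simp
qed

text \<open>Cantor unpairing.  The pair (a, b) is coded by triangle (a + b) + a; the diagonal
  index a + b of a code is found by minimisation.\<close>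

definition diag :: "nat \<Rightarrow> nat" where
  "diag c = (LEAST s. c < triangle (Suc s))"

lemma triangle_mono: "m \<le> n \<Longrightarrow> triangle m \<le> triangle n"
  by (induction n rule: dec_induct) auto

lemma diag_prod_encode: "diag (prod_encode (a, b)) = a + b"
  unfolding diag_def
proof (rule Least_equality)
  show "prod_encode (a, b) < triangle (Suc (a + b))" by (simp add: prod_encode_def)
next
  fix s assume less: "prod_encode (a, b) < triangle (Suc s)"
  show "a + b \<le> s"
  proof (rule ccontr)
    assume "\<not> a + b \<le> s"
    then have "triangle (Suc s) \<le> triangle (a + b)" by (intro triangle_mono) simp
    with less show False by (simp add: prod_encode_def)
  qed
qed

lemma prod_decode_diag:
  "prod_decode c = (c - triangle (diag c), diag c - (c - triangle (diag c)))"
proof -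
  obtain a b where c: "c = prod_encode (a, b)" by (metis prod_decode_inverse surj_pair)
  then show ?thesis by (simp add: diag_prod_encode) (simp add: prod_encode_def)
qed

lemma cn_diag:
  assumes "cn n g" shows "cn n (\<lambda>xs. diag (g xs))"
proof -
  define f where "f ys = Suc (ys ! 1) - triangle (Suc (ys ! 0))" for ys
  have "cn (Suc 1) f" unfolding f_def by (intro cn_diff cn_Suc cn_triangle cn_proj) auto
  then have "cn 1 (\<lambda>xs. LEAST s. f (s # xs) = 0)"
  proof (rule cn_mini)
    fix xs :: "nat list"
    show "\<exists>s. f (s # xs) = 0" unfolding f_def by (intro exI[of _ "xs ! 0"]) simp
  qed
  then have "cn 1 (\<lambda>xs. diag (xs ! 0))" unfolding diag_def f_def by (simp add: less_Suc_eq_le)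
  from cn_comp1[OF this assms] show ?thesis by simp
qed

lemma cn_prod_encode:
  assumes "cn n g" and "cn n h" shows "cn n (\<lambda>xs. prod_encode (g xs, h xs))"
  unfolding prod_encode_def by (simp, intro cn_add cn_triangle assms)

lemma cn_prod_decode:
  assumes "cn n g"
  shows "cn n (\<lambda>xs. fst (prod_decode (g xs)))" and "cn n (\<lambda>xs. snd (prod_decode (g xs)))"
  unfolding prod_decode_diag fst_conv snd_conv by (intro cn_diff cn_triangle cn_diag assms)+

fun code_nth :: "nat \<Rightarrow> nat \<Rightarrow> nat" where
  "code_nth 0 c = fst (prod_decode (c - 1))"
| "code_nth (Suc t) c = code_nth t (snd (prod_decode (c - 1)))"

lemma code_nth_list_encode: "t < length cs \<Longrightarrow> code_nth t (list_encode cs) = cs ! t"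
  by (induction cs arbitrary: t) (auto simp: nth_Cons split: nat.splits)

lemma cn_code_nth: "cn n g \<Longrightarrow> cn n (\<lambda>xs. code_nth t (g xs))"
proof (induction t arbitrary: g)
  case 0
  show ?case unfolding code_nth.simps by (intro cn_prod_decode cn_pred 0)
next
  case (Suc t)
  show ?case unfolding code_nth.simps by (intro Suc.IH cn_prod_decode cn_pred Suc.prems)
qed

lemma cn_list_encode:
  "\<forall>t\<in>set ts. cn n (g t) \<Longrightarrow> cn n (\<lambda>xs. list_encode (map (\<lambda>t. g t xs) ts))"
  by (induction ts) (auto intro: cn_Suc cn_prod_encode cn_const)

lemma cn_sum: "\<forall>t<(N::nat). cn n (g t) \<Longrightarrow> cn n (\<lambda>xs. \<Sum>t<N. g t xs)"
  by (induction N) (auto intro: cn_add cn_const)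

text \<open>Unbounded search: if for every input a the computable predicate Q [j, inp a] = 0 has
  a solution j, and every solution is decoded by D to out a, then inp a \<mapsto> out a is
  computed by a single program (which may diverge on inputs outside the range of inp).\<close>

lemma search_computes:
  fixes inp out :: "'b \<Rightarrow> nat"
  assumes "cn 2 Q" and "cn 1 D"
    and found: "\<And>a. \<exists>j. Q [j, inp a] = 0"
    and correct: "\<And>a j. Q [j, inp a] = 0 \<Longrightarrow> D [j] = out a"
  shows "\<exists>r. \<forall>a. reval r [inp a] (out a)"
proof -
  obtain rQ where rQ: "\<forall>ys. length ys = Suc 1 \<longrightarrow> reval rQ ys (Q ys)"
    using assms(1) unfolding computable_nat_def numeral_2_eq_2 by auto
  obtain rD where rD: "\<forall>ys. length ys = 1 \<longrightarrow> reval rD ys (D ys)"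
    using assms(2) unfolding computable_nat_def by auto
  have "reval (Comp rD [Mini rQ]) [inp a] (out a)" for a
  proof -
    obtain j where "Q [j, inp a] = 0" using found by blast
    define m where "m = (LEAST j. Q [j, inp a] = 0)"
    have "reval (Mini rQ) [inp a] m"
      unfolding m_def using reval_mini_least[OF rQ, of "[inp a]"] \<open>Q [j, inp a] = 0\<close> by simp
    moreover have "Q [m, inp a] = 0" unfolding m_def using \<open>Q [j, inp a] = 0\<close> by (rule LeastI)
    then have "D [m] = out a" by (rule correct)
    then have "reval rD [m] (out a)" using rD[rule_format, of "[m]"] by simp
    ultimately show ?thesis by (intro reval_comp[where ys="[m]"]) auto
  qed
  then show ?thesis by blast
qed

lemma iterate_computable:
  assumes step: "\<forall>m. reval r [h m] (h (Suc m))"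
  shows "cn 1 (\<lambda>xs. h (xs ! 0))"
proof -
  obtain r0 where r0: "reval r0 [] (h 0)"
    using cn_const[of 0 "h 0"] unfolding computable_nat_def by auto
  have iter: "reval (Prim r0 (Comp r [Proj 1])) [m] (h m)" for m
  proof (induction m)
    case 0
    show ?case using r0 by (rule reval_prim0)
  next
    case (Suc m)
    have "reval (Proj 1) [m, h m] (h m)" using reval_proj[of 1 "[m, h m]"] by simp
    then have "reval (Comp r [Proj 1]) [m, h m] (h (Suc m))"
      using step by (intro reval_comp[where ys="[h m]"]) auto
    then show ?case by (rule reval_primS[OF Suc.IH])
  qed
  have "reval (Prim r0 (Comp r [Proj 1])) xs (h (xs ! 0))" if "length xs = 1" for xs
    using that iter by (cases xs) auto
  then show ?thesis unfolding computable_nat_def by blast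
qed

lemma int_decode_parity:
  "int_decode n = (if n mod 2 = 0 then int (n div 2) else - int (Suc (n div 2)))"
  by (auto simp: int_decode_def sum_decode_def even_iff_mod_2_eq_zero)

lemma int_walk_computable:
  fixes h :: "int \<Rightarrow> nat"
  assumes shift: "\<And>c. \<exists>r. \<forall>a. reval r [h a] (h (a + c))"
  shows "cn 1 (\<lambda>xs. h (int_decode (xs ! 0)))"
proof -
  obtain up where up: "\<forall>a. reval up [h a] (h (a + 1))" using shift by blast
  obtain down where down: "\<forall>a. reval down [h a] (h (a + -1))" using shift by blast
  have "cn 1 (\<lambda>xs. h (int (xs ! 0)))"
    by (rule iterate_computable[of up]) (metis up of_nat_Suc add.commute)
  from cn_comp1[OF this cn_div2[OF cn_proj[of 0 1]]]
  have nonneg: "cn 1 (\<lambda>xs. h (int (xs ! 0 div 2)))" by simp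
  have "cn 1 (\<lambda>xs. h (- int (xs ! 0)))"
    by (rule iterate_computable[of down]) (metis down of_nat_Suc minus_add_distrib add.commute)
  from cn_comp1[OF this cn_Suc[OF cn_div2[OF cn_proj[of 0 1]]]]
  have neg: "cn 1 (\<lambda>xs. h (- int (Suc (xs ! 0 div 2))))" by simp
  have "cn 1 (\<lambda>xs. if xs ! 0 mod 2 = 0 then h (int (xs ! 0 div 2))
                   else h (- int (Suc (xs ! 0 div 2))))"
    by (intro cn_if_zero cn_mod2 cn_proj nonneg neg) simp
  then show ?thesis by (simp add: int_decode_parity if_distrib)
qed

text \<open>The valuation assigning the entries of t to the first variables and the function x
  to the remaining ones; this is the shape of the valuations in the definition of
  Diophantine sets.\<close>

definition join_val :: "'b list \<Rightarrow> (nat \<Rightarrow> 'b) \<Rightarrow> nat \<Rightarrow> 'b" where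
  "join_val t x i = (if i < length t then t ! i else x (i - length t))"

lemma join_val_append: "join_val (u @ w) x = join_val u (join_val w x)"
  by (auto simp: join_val_def nth_append fun_eq_iff)

lemma join_val_split: "join_val (map v [0..<k]) (\<lambda>i. v (i + k)) = v"
  by (auto simp: join_val_def fun_eq_iff)

primrec pvars :: "'a dpoly \<Rightarrow> nat set" where
  "pvars (PConst c) = {}"
| "pvars (PVar i) = {i}"
| "pvars (PAdd p q) = pvars p \<union> pvars q"
| "pvars (PMul p q) = pvars p \<union> pvars q"

lemma finite_pvars: "finite (pvars p)"
  by (induction p) auto

definition code_op :: "(int list \<Rightarrow> int) \<Rightarrow> nat \<Rightarrow> nat \<Rightarrow> nat" where
  "code_op H a b = int_encode (H [int_decode a, int_decode b])"

lemma cn_code_op: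
  assumes "computable_int 2 H" and "cn n g" and "cn n h"
  shows "cn n (\<lambda>xs. code_op H (g xs) (h xs))"
proof -
  have "cn 2 (\<lambda>xs. int_encode (H (map int_decode xs)))"
    using assms(1) unfolding computable_int_def .
  moreover have "int_encode (H (map int_decode xs)) = code_op H (xs ! 0) (xs ! 1)"
    if "length xs = 2" for xs
    using that by (auto simp: code_op_def numeral_2_eq_2 length_Suc_conv)
  ultimately have "cn 2 (\<lambda>xs. code_op H (xs ! 0) (xs ! 1))" by (rule cn_cong)
  from cn_comp2[OF this assms(2,3)] show ?thesis by simp
qed

lemma graph_image_polynomial:
  fixes phi :: "int \<Rightarrow> 'a::comm_ring_1 list" and g :: "int \<Rightarrow> int"
  assumes len: "\<forall>a. length (phi a) = k" and inj: "inj phi"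
    and dio: "diophantine (k * 2) ((\<lambda>a. concat (map phi a)) ` {[a, g a] | a. True})"
  obtains p where "\<And>a y. length y = k \<Longrightarrow>
    (\<exists>x. peval p (join_val (phi a) (join_val y x)) = 0) \<longleftrightarrow> y = phi (g a)"
proof -
  let ?T = "(\<lambda>a. concat (map phi a)) ` {[a, g a] | a. True}"
  from dio obtain p where p: "\<forall>t. length t = k * 2 \<longrightarrow>
      (t \<in> ?T \<longleftrightarrow> (\<exists>x. peval p (\<lambda>i. if i < k * 2 then t ! i else x (i - k * 2)) = 0))"
    unfolding diophantine_def by blast
  have member: "phi a @ y \<in> ?T \<longleftrightarrow> y = phi (g a)" if "length y = k" for a y
  proof
    assume "phi a @ y \<in> ?T"
    then obtain c where "phi c @ phi (g c) = phi a @ y" by auto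
    then have "phi c = phi a" and "phi (g c) = y" using len that by (auto simp: append_eq_append_conv)
    then show "y = phi (g a)" using inj by (auto dest: injD)
  qed (auto intro!: image_eqI[of _ _ "[a, g a]"])
  show ?thesis
  proof (rule that)
    fix a and y :: "'a list"
    assume y: "length y = k"
    then have length: "length (phi a @ y) = k * 2" using len by simp
    have joined: "join_val (phi a) (join_val y x)
        = (\<lambda>i. if i < k * 2 then (phi a @ y) ! i else x (i - k * 2))" for x
      unfolding join_val_append[symmetric] using length by (simp add: fun_eq_iff join_val_def)
    have "(\<exists>x. peval p (join_val (phi a) (join_val y x)) = 0) \<longleftrightarrow> phi a @ y \<in> ?T"
      unfolding joined using p length by blast
    also have "\<dots> \<longleftrightarrow> y = phi (g a)" by (rule member[OF y])
    finally show "(\<exists>x. peval p (join_val (phi a) (join_val y x)) = 0) \<longleftrightarrow> y = phi (g a)" .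
  qed
qed

locale presented_ring =
  fixes iota :: "'a::comm_ring_1 \<Rightarrow> int" and F G :: "int list \<Rightarrow> int"
  assumes inj_iota: "inj iota"
    and range_computable: "computable_int 1 (\<lambda>xs. if xs ! 0 \<in> range iota then 1 else 0)"
    and F_computable: "computable_int 2 F" and F_add: "\<And>x y. F [iota x, iota y] = iota (x + y)"
    and G_computable: "computable_int 2 G" and G_mult: "\<And>x y. G [iota x, iota y] = iota (x * y)"
begin

definition rcode :: "'a \<Rightarrow> nat" where
  "rcode x = int_encode (iota x)"

lemma rcode_eq_iff: "rcode x = rcode y \<longleftrightarrow> x = y"
  using inj_iota by (auto simp: rcode_def int_encode_eq inj_eq)

lemma cn_not_rcode:
  assumes "cn n g" shows "cn n (\<lambda>xs. if g xs \<notin> range rcode then 1 else 0)"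
proof -
  define test where "test c = int_encode (if int_decode c \<in> range iota then 1 else 0)" for c
  have "cn 1 (\<lambda>xs. int_encode (if map int_decode xs ! 0 \<in> range iota then 1 else 0))"
    using range_computable unfolding computable_int_def by simp
  moreover have "int_encode (if map int_decode xs ! 0 \<in> range iota then 1 else 0) = test (xs ! 0)"
    if "length xs = 1" for xs
    using that by (simp add: test_def)
  ultimately have "cn 1 (\<lambda>xs. test (xs ! 0))" by (rule cn_cong)
  from cn_if_zero[OF cn_comp1[OF this assms] cn_const cn_const]
  have "cn n (\<lambda>xs. if test (g xs) = 0 then 1 else 0)" by simp
  moreover have "test c = 0 \<longleftrightarrow> c \<notin> range rcode" for c
  proof -
    have "int_decode c \<in> range iota \<longleftrightarrow> c \<in> range rcode"
    proof
      assume "int_decode c \<in> range iota"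
      then obtain x where "int_decode c = iota x" by auto
      then have "c = rcode x" unfolding rcode_def by (metis int_decode_inverse)
      then show "c \<in> range rcode" by simp
    qed (auto simp: rcode_def)
    moreover have "int_encode 1 \<noteq> 0" "int_encode 0 = 0"
      by (simp_all add: int_encode_def sum_encode_def)
    ultimately show ?thesis by (auto simp: test_def)
  qed
  ultimately show ?thesis by simp
qed

primrec code_eval :: "'a dpoly \<Rightarrow> (nat \<Rightarrow> nat) \<Rightarrow> nat" where
  "code_eval (PConst c) v = rcode c"
| "code_eval (PVar i) v = v i"
| "code_eval (PAdd p q) v = code_op F (code_eval p v) (code_eval q v)"
| "code_eval (PMul p q) v = code_op G (code_eval p v) (code_eval q v)"

lemma cn_code_eval:
  assumes "\<And>i. cn n (e i)" shows "cn n (\<lambda>xs. code_eval p (\<lambda>i. e i xs))"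
  by (induction p) (simp_all add: assms cn_const cn_code_op F_computable G_computable)

lemma code_eval_correct:
  assumes "\<forall>i\<in>pvars p. v i = rcode (w i)" shows "code_eval p v = rcode (peval p w)"
  using assms by (induction p) (simp_all add: code_op_def rcode_def F_add G_mult)

definition tuple_code :: "'a list \<Rightarrow> nat" where
  "tuple_code u = list_encode (map rcode u)"

definition join_code :: "nat \<Rightarrow> nat \<Rightarrow> nat \<Rightarrow> nat \<Rightarrow> nat" where
  "join_code k c j i = (if i < k then code_nth i c else code_nth (i - k) j)"

lemma cn_join_code:
  assumes "cn n c" and "cn n j" shows "cn n (\<lambda>xs. join_code k (c xs) (j xs) i)"
  by (cases "i < k") (simp_all add: join_code_def cn_code_nth assms)

definition cert_defect :: "'a dpoly \<Rightarrow> nat \<Rightarrow> nat \<Rightarrow> nat \<Rightarrow> nat \<Rightarrow> nat" where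
  "cert_defect p k N c j =
     (\<Sum>t<N. if code_nth t j \<notin> range rcode then 1 else 0)
     + ((code_eval p (join_code k c j) - rcode 0) + (rcode 0 - code_eval p (join_code k c j)))"

lemma cert_defect_eq_0:
  "cert_defect p k N c j = 0 \<longleftrightarrow>
     (\<forall>t<N. code_nth t j \<in> range rcode) \<and> code_eval p (join_code k c j) = rcode 0"
  by (auto simp: cert_defect_def)

lemma cn_cert_defect: "cn 2 (\<lambda>xs. cert_defect p k N (xs ! 1) (xs ! 0))"
  unfolding cert_defect_def
  by (intro cn_add cn_diff cn_sum allI impI cn_not_rcode cn_code_nth cn_proj cn_const
      cn_code_eval cn_join_code) auto

lemma code_eval_join:
  assumes "length u = k" and "pvars p \<subseteq> {..<k + N}" and "\<forall>t<N. code_nth t j = rcode (v t)"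
  shows "code_eval p (join_code k (tuple_code u) j) = rcode (peval p (join_val u v))"
proof (rule code_eval_correct, intro ballI)
  fix i assume "i \<in> pvars p"
  then have "i < k + N" using assms(2) by auto
  then show "join_code k (tuple_code u) j i = rcode (join_val u v i)"
    using assms(1,3) by (auto simp: join_code_def join_val_def tuple_code_def code_nth_list_encode)
qed

lemma cert_complete:
  assumes "length u = k" and "pvars p \<subseteq> {..<k + N}" and "peval p (join_val u v) = 0"
  shows "cert_defect p k N (tuple_code u) (list_encode (map (rcode \<circ> v) [0..<N])) = 0"
proof -
  have codes: "\<forall>t<N. code_nth t (list_encode (map (rcode \<circ> v) [0..<N])) = rcode (v t)"
    by (simp add: code_nth_list_encode)
  show ?thesis
    unfolding cert_defect_eq_0 using code_eval_join[OF assms(1,2) codes] assms(3) codes by auto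
qed

lemma cert_sound:
  assumes "length u = k" and "pvars p \<subseteq> {..<k + N}" and "cert_defect p k N (tuple_code u) j = 0"
  obtains v where "\<forall>t<N. code_nth t j = rcode (v t)" and "peval p (join_val u v) = 0"
proof -
  from assms(3) have codes: "\<forall>t<N. code_nth t j \<in> range rcode"
    and zero: "code_eval p (join_code k (tuple_code u) j) = rcode 0"
    by (simp_all add: cert_defect_eq_0)
  define v where "v t = (SOME x. code_nth t j = rcode x)" for t
  have v: "\<forall>t<N. code_nth t j = rcode (v t)"
    using codes unfolding v_def by (metis (mono_tags, lifting) image_iff someI_ex)
  have "rcode (peval p (join_val u v)) = rcode 0" using code_eval_join[OF assms(1,2) v] zero by simp
  then show ?thesis using that v rcode_eq_iff by blast
qed

lemma graph_step_computable:
  fixes phi :: "int \<Rightarrow> 'a list" and g :: "int \<Rightarrow> int"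
  assumes len: "\<forall>a. length (phi a) = k" and "inj phi"
    and "diophantine (k * 2) ((\<lambda>a. concat (map phi a)) ` {[a, g a] | a. True})"
  shows "\<exists>r. \<forall>a. reval r [tuple_code (phi a)] (tuple_code (phi (g a)))"
proof -
  obtain p where sol: "\<And>a y. length y = k \<Longrightarrow>
      (\<exists>x. peval p (join_val (phi a) (join_val y x)) = 0) \<longleftrightarrow> y = phi (g a)"
    using graph_image_polynomial[OF assms] by blast
  define N where "N = k + Max (insert 0 (pvars p)) + 1"
  have "i \<le> Max (insert 0 (pvars p))" if "i \<in> pvars p" for i
    using finite_pvars[of p] that by simp
  then have vars: "pvars p \<subseteq> {..<k + N}" by (fastforce simp: N_def)
  define decode where "decode xs = list_encode (map (\<lambda>t. code_nth t (xs ! 0)) [0..<k])" for xs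
  have "cn 1 decode" unfolding decode_def by (intro cn_list_encode ballI cn_code_nth cn_proj) simp
  moreover have "\<exists>j. cert_defect p k N (tuple_code (phi a)) j = 0" for a
  proof -
    obtain x where "peval p (join_val (phi a) (join_val (phi (g a)) x)) = 0"
      using sol[of "phi (g a)" a] len by auto
    from cert_complete[OF _ vars this] len show ?thesis by blast
  qed
  moreover have "decode [j] = tuple_code (phi (g a))"
    if cert: "cert_defect p k N (tuple_code (phi a)) j = 0" for a j
  proof -
    obtain v where v: "\<forall>t<N. code_nth t j = rcode (v t)" and root: "peval p (join_val (phi a) v) = 0"
      using cert_sound[OF _ vars cert] len by metis
    have "peval p (join_val (phi a) (join_val (map v [0..<k]) (\<lambda>i. v (i + k)))) = 0"
      using root by (simp only: join_val_split)
    then have next_value: "map v [0..<k] = phi (g a)" using sol[of "map v [0..<k]" a] by auto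
    have codes: "map (\<lambda>t. code_nth t j) [0..<k] = map (rcode \<circ> v) [0..<k]"
      using v by (simp add: N_def)
    have "decode [j] = list_encode (map (rcode \<circ> v) [0..<k])"
      by (simp only: decode_def nth_Cons_0 codes)
    also have "\<dots> = tuple_code (phi (g a))" by (simp add: tuple_code_def flip: next_value)
    finally show ?thesis .
  qed
  ultimately show ?thesis
    using search_computes[OF cn_cert_defect[of p k N], where inp="\<lambda>a. tuple_code (phi a)"] by simp
qed

end

lemma diophantine_shift: "diophantine 2 {[a, a + c] | a::int. True}"
  unfolding diophantine_def
proof (intro conjI exI allI impI)
  show "{[a, a + c] | a::int. True} \<subseteq> {t. length t = 2}" by auto
  fix t :: "int list" assume "length t = 2"
  then obtain a b where t: "t = [a, b]" by (auto simp: numeral_2_eq_2 length_Suc_conv)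
  let ?p = "PAdd (PVar 1) (PAdd (PMul (PConst (-1)) (PVar 0)) (PConst (-c)))"
  show "t \<in> {[a, a + c] | a. True} \<longleftrightarrow> (\<exists>x. peval ?p (\<lambda>i. if i < 2 then t ! i else x (i - 2)) = 0)"
    by (auto simp: t)
qed

theorem mainTheorem9:
  fixes iota :: "'a::comm_ring_1 \<Rightarrow> int" and phi :: "int \<Rightarrow> 'a list" and k :: nat
  assumes "recursive_presentation iota"
    and "\<forall>a. length (phi a) = k"
    and "inj phi"
    and "\<forall>m\<ge>1. \<forall>A :: int list set. diophantine m A \<longrightarrow>
           diophantine (k * m) ((\<lambda>a. concat (map phi a)) ` A)"
  shows "\<forall>i<k. computable_int 1 (\<lambda>xs. iota (phi (xs ! 0) ! i))"
proof (intro allI impI)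
  fix i assume "i < k"
  from assms(1) obtain F G where "presented_ring iota F G"
    unfolding recursive_presentation_def presented_ring_def by blast
  then interpret presented_ring iota F G .
  have "\<exists>r. \<forall>a. reval r [tuple_code (phi a)] (tuple_code (phi (a + c)))" for c
    using graph_step_computable[OF assms(2,3)] assms(4)[rule_format, of 2] diophantine_shift[of c]
    by simp
  then have "cn 1 (\<lambda>xs. tuple_code (phi (int_decode (xs ! 0))))" by (rule int_walk_computable)
  then have "cn 1 (\<lambda>xs. code_nth i (tuple_code (phi (int_decode (xs ! 0)))))" by (rule cn_code_nth)
  then show "computable_int 1 (\<lambda>xs. iota (phi (xs ! 0) ! i))"
    unfolding computable_int_def
    by (rule cn_cong) (simp add: tuple_code_def code_nth_list_encode rcode_def assms(2) \<open>i < k\<close>)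
qed

end
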